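(* For every integer $n \geq 1$, $$\sum_{\pi \vdash n} t(\pi) = \sum_{i \geq 1} S(i)\, p(n-i).$$
   Context: $p(m)$ is the number of partitions of $m$, with $p(0)=1$ and $p(m)=0$ for $m<0$. For a partition $\pi$, $f_i$ denotes the number of times $i$ appears as a part of $\pi$, and $t(\pi)$ is the nonnegative integer such that $f_i$ is odd for all $1 \leq i \leq t(\pi)$ and $f_{t(\pi)+1}$ is even (possibly zero). The rank of a partition is its largest part minus its number of parts. For $i \geq 1$, $S(i)$ is the number of partitions of $i$ into distinct parts with even rank minus the number of partitions of $i$ into distinct parts with odd rank. *)

theory Defs
  imports Main "HOL-Library.Multiset"
begin

definition partitions :: "nat \<Rightarrow> nat multiset set" where
  "partitions m = {P. (\<forall>x\<in>#P. 0 < x) \<and> sum_mset P = m}"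

definition npart :: "int \<Rightarrow> int" where
  "npart m = (if m < 0 then 0 else int (card (partitions (nat m))))"

text \<open>t(P): least t with f_{t+1} even; then f_i is odd for all 1 <= i <= t.\<close>
definition tstat :: "nat multiset \<Rightarrow> nat" where
  "tstat P = (LEAST t. even (count P (t + 1)))"

definition prank :: "nat multiset \<Rightarrow> int" where
  "prank P = int (Max (set_mset P)) - int (size P)"

definition distinct_partitions :: "nat \<Rightarrow> nat multiset set" where
  "distinct_partitions m = {P \<in> partitions m. \<forall>x. count P x \<le> 1}"

definition S :: "nat \<Rightarrow> int" where
  "S i = int (card {P \<in> distinct_partitions i. even (prank P)})
       - int (card {P \<in> distinct_partitions i. odd (prank P)})"

end

theory Submission
  imports Defs "HOL-Computational_Algebra.Formal_Power_Series"
begin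

(* Let D_k = \<Prod>j\<le>k. X^j / (1 + X^j); its coefficient of X^i is the number of partitions of i
   into k distinct parts, counted with sign (-1)^rank, so \<Sum>k. D_k = \<Sum>i. S i X^i.
   Multiplying the partition generating function \<Prod>j. 1 / (1 - X^j) by D_k replaces, for every
   j \<le> k, the factor 1 / (1 - X^j) by X^j / (1 - X^(2j)), which generates the odd multiplicities
   of j. Hence the coefficient of X^n in D_k times the partition generating function counts the
   partitions \<pi> of n with t(\<pi>) \<ge> k, and summing over k gives \<Sum> t(\<pi>). Everything is proved
   for truncated products over j \<le> N in int fps, using D_k (1 + X^k) = X^k D_(k-1) and
   cancelling 1 + X^k instead of dividing. *)

unbundle fps_syntax

lemma sum_eq_sum_card_ge:
  fixes f :: "'a \<Rightarrow> nat"
  assumes "finite A" "\<forall>x\<in>A. f x \<le> n"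
  shows "(\<Sum>x\<in>A. f x) = (\<Sum>k\<in>{1..n}. card {x\<in>A. k \<le> f x})"
proof -
  have "{1..n} \<inter> {k. k \<le> f x} = {1..f x}" if "x \<in> A" for x
    using assms that by auto
  then have "(\<Sum>x\<in>A. f x) = (\<Sum>x\<in>A. \<Sum>k\<in>{1..n}. of_bool (k \<le> f x))"
    by (intro sum.cong) (simp_all add: sum_of_bool_eq)
  also have "\<dots> = (\<Sum>k\<in>{1..n}. \<Sum>x\<in>A. of_bool (k \<le> f x))"
    by (rule sum.swap)
  also have "\<dots> = (\<Sum>k\<in>{1..n}. card {x\<in>A. k \<le> f x})"
    using assms by (simp add: sum_of_bool_eq Int_def)
  finally show ?thesis .
qed

lemma prod_of_bool:
  "finite A \<Longrightarrow> (\<Prod>x\<in>A. of_bool (P x) :: 'a::comm_semiring_1) = of_bool (\<forall>x\<in>A. P x)"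
  by (induction A rule: finite_induct) auto

lemma sum_multiples:
  fixes g :: "nat \<Rightarrow> 'a::comm_monoid_add"
  assumes "0 < a"
  shows "(\<Sum>i\<le>m. if a dvd i then g (i div a) else 0) = (\<Sum>c\<le>m div a. g c)"
proof -
  have "{i. i \<le> m \<and> a dvd i} = (\<lambda>c. a * c) ` {..m div a}"
    using assms by (auto simp: less_eq_div_iff_mult_less_eq mult.commute elim!: dvdE)
  then have "(\<Sum>i\<le>m. if a dvd i then g (i div a) else 0) = (\<Sum>i\<in>(\<lambda>c. a * c) ` {..m div a}. g (i div a))"
    by (simp add: sum.inter_filter[symmetric] Collect_conj_eq Int_commute atMost_def)
  also have "\<dots> = (\<Sum>c\<le>m div a. g c)"
    using assms by (simp add: sum.reindex inj_on_def)
  finally show ?thesis .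
qed

lemma card_le_sum_nat: "finite A \<Longrightarrow> 0 \<notin> A \<Longrightarrow> card A \<le> \<Sum>A"
  for A :: "nat set"
proof -
  assume "finite A" "0 \<notin> A"
  then have "(\<Sum>_\<in>A. 1) \<le> \<Sum>A"
    by (intro sum_mono) (metis One_nat_def Suc_leI neq0_conv)
  then show ?thesis by simp
qed

lemma subset_range_Suc: "0 \<notin> A \<Longrightarrow> A \<subseteq> range Suc"
  by (metis greaterThan_0 greaterThan_iff neq0_conv subsetI)

lemma sum_Suc_image: "\<Sum>(Suc ` B) = \<Sum>B + card B"
  using sum_Suc[of "\<lambda>x. x" B] by (simp add: sum.reindex)

lemma size_le_sum_mset: "(\<forall>x\<in>#P. 0 < x) \<Longrightarrow> size P \<le> sum_mset (P :: nat multiset)"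
  by (induction P) auto

lemma count_times_le_sum_mset: "x * count P x \<le> sum_mset (P :: nat multiset)"
  by (induction P) auto

lemma count_greater_sum_mset: "sum_mset (P :: nat multiset) < x \<Longrightarrow> count P x = 0"
  using count_times_le_sum_mset[of x P] by (cases "count P x") auto

lemma mset_set_set_mset_eq: "\<forall>x. count P x \<le> 1 \<Longrightarrow> mset_set (set_mset P) = P"
proof (rule multiset_eqI)
  fix x assume "\<forall>x. count P x \<le> 1"
  then have "count P x \<le> 1" by blast
  then show "count (mset_set (set_mset P)) x = count P x"
    by (cases "count P x") (auto simp: count_mset_set' not_in_iff)
qed

section \<open>Partitions and the statistic t\<close>

lemma finite_partitions: "finite (partitions m)"
proof -
  have "partitions m \<subseteq> mset ` {xs. set xs \<subseteq> {..m} \<and> length xs \<le> m}"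
  proof
    fix P assume P: "P \<in> partitions m"
    obtain xs where xs: "P = mset xs" using ex_mset by metis
    have "\<forall>x\<in>#P. x \<le> m"
      using P by (auto simp: partitions_def dest!: multi_member_split)
    moreover have "size P \<le> m"
      using P size_le_sum_mset[of P] by (simp add: partitions_def)
    ultimately
    show "P \<in> mset ` {xs. set xs \<subseteq> {..m} \<and> length xs \<le> m}"
      using xs by auto
  qed
  moreover have "finite {xs. set xs \<subseteq> {..m} \<and> length xs \<le> m}"
    by (rule finite_lists_length_le) simp
  ultimately show ?thesis by (rule finite_subset[OF _ finite_imageI])
qed

lemma tstat_le_sum_mset: "tstat P \<le> sum_mset P"
  unfolding tstat_def by (intro Least_le) (simp add: count_greater_sum_mset)

lemma le_tstat_iff: "k \<le> tstat P \<longleftrightarrow> (\<forall>j\<in>{1..k}. odd (count P j))"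
proof
  assume k: "k \<le> tstat P"
  show "\<forall>j\<in>{1..k}. odd (count P j)"
  proof
    fix j assume "j \<in> {1..k}"
    then have "j - 1 < tstat P" and "j - 1 + 1 = j" using k by auto
    then show "odd (count P j)"
      using not_less_Least[of "j - 1" "\<lambda>t. even (count P (t + 1))"] by (simp add: tstat_def)
  qed
next
  assume odd: "\<forall>j\<in>{1..k}. odd (count P j)"
  have even: "even (count P (tstat P + 1))"
    unfolding tstat_def by (rule LeastI[of _ "sum_mset P"]) (simp add: count_greater_sum_mset)
  show "k \<le> tstat P"
  proof (rule ccontr)
    assume "\<not> k \<le> tstat P"
    then have "tstat P + 1 \<in> {1..k}" by simp
    with odd even show False by blast
  qed
qed

definition bounded_partitions :: "nat \<Rightarrow> nat \<Rightarrow> nat multiset set" where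
  "bounded_partitions N m = {P \<in> partitions m. \<forall>x\<in>#P. x \<le> N}"

lemma bounded_partitions_0: "bounded_partitions 0 m = (if m = 0 then {{#}} else {})"
proof -
  have "P \<in> bounded_partitions 0 m \<longleftrightarrow> P = {#} \<and> m = 0" for P
  proof
    assume P: "P \<in> bounded_partitions 0 m"
    then have "set_mset P = {}"
      by (fastforce simp: bounded_partitions_def partitions_def)
    with P show "P = {#} \<and> m = 0"
      by (simp add: bounded_partitions_def partitions_def)
  qed (simp add: bounded_partitions_def partitions_def)
  then show ?thesis by auto
qed

lemma bounded_partitions_eq_partitions: "m \<le> N \<Longrightarrow> bounded_partitions N m = partitions m"
  by (auto simp: bounded_partitions_def partitions_def dest!: multi_member_split)

lemma bounded_partitions_Suc_fiber:
  assumes "Suc N * c \<le> m"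
  shows "{P \<in> bounded_partitions (Suc N) m. count P (Suc N) = c}
       = (\<lambda>Q. Q + replicate_mset c (Suc N)) ` bounded_partitions N (m - Suc N * c)"
proof (intro equalityI subsetI)
  fix P assume "P \<in> {P \<in> bounded_partitions (Suc N) m. count P (Suc N) = c}"
  then have P: "P \<in> bounded_partitions (Suc N) m" and c: "count P (Suc N) = c" by auto
  define Q where "Q = filter_mset (\<lambda>x. x \<le> N) P"
  have "filter_mset (\<lambda>x. \<not> x \<le> N) P = filter_mset (\<lambda>x. x = Suc N) P"
    using P by (intro filter_mset_cong) (auto simp: bounded_partitions_def)
  then have PQ: "P = Q + replicate_mset c (Suc N)"
    using multiset_partition[of P "\<lambda>x. x \<le> N"] c by (simp add: Q_def filter_eq_replicate_mset)
  then have "sum_mset P = sum_mset Q + Suc N * c" by simp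
  then have "Q \<in> bounded_partitions N (m - Suc N * c)"
    using P by (auto simp: bounded_partitions_def partitions_def Q_def)
  then show "P \<in> (\<lambda>Q. Q + replicate_mset c (Suc N)) ` bounded_partitions N (m - Suc N * c)"
    using PQ by blast
next
  fix P assume "P \<in> (\<lambda>Q. Q + replicate_mset c (Suc N)) ` bounded_partitions N (m - Suc N * c)"
  then obtain Q where Q: "Q \<in> bounded_partitions N (m - Suc N * c)"
    and P: "P = Q + replicate_mset c (Suc N)" by auto
  have "count Q (Suc N) = 0"
    using Q by (auto simp: bounded_partitions_def count_eq_zero_iff)
  then show "P \<in> {P \<in> bounded_partitions (Suc N) m. count P (Suc N) = c}"
    using Q P assms by (auto simp: bounded_partitions_def partitions_def)
qed

section \<open>Generating functions for partitions with weighted multiplicities\<close>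

(* The factor \<Sum>c. u c X^(j c) contributed by the part j, multiplicity c weighted by u c. *)
definition part_factor :: "nat \<Rightarrow> (nat \<Rightarrow> 'a::zero) \<Rightarrow> 'a fps" where
  "part_factor j u = Abs_fps (\<lambda>m. if j dvd m then u (m div j) else 0)"

definition partition_gf :: "nat \<Rightarrow> (nat \<Rightarrow> nat \<Rightarrow> 'a::comm_semiring_1) \<Rightarrow> 'a fps" where
  "partition_gf N w = (\<Prod>j\<in>{1..N}. part_factor j (w j))"

lemma sum_bounded_partitions_fiber:
  fixes w :: "nat \<Rightarrow> nat \<Rightarrow> 'a::comm_semiring_1"
  assumes "Suc N * c \<le> m"
  shows "(\<Sum>P\<in>{P \<in> bounded_partitions (Suc N) m. count P (Suc N) = c}. \<Prod>j\<in>{1..Suc N}. w j (count P j))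
       = w (Suc N) c * (\<Sum>Q\<in>bounded_partitions N (m - Suc N * c). \<Prod>j\<in>{1..N}. w j (count Q j))"
proof -
  have inj: "inj_on (\<lambda>Q. Q + replicate_mset c (Suc N)) (bounded_partitions N (m - Suc N * c))"
    by (simp add: inj_on_def)
  have "(\<Prod>j\<in>{1..Suc N}. w j (count (Q + replicate_mset c (Suc N)) j))
      = w (Suc N) c * (\<Prod>j\<in>{1..N}. w j (count Q j))"
    if "Q \<in> bounded_partitions N (m - Suc N * c)" for Q
  proof -
    have "count Q (Suc N) = 0"
      using that by (auto simp: bounded_partitions_def count_eq_zero_iff)
    then show ?thesis
      by (simp add: atLeastAtMostSuc_conv)
  qed
  then show ?thesis
    unfolding bounded_partitions_Suc_fiber[OF assms] sum.reindex[OF inj]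
    by (simp add: sum_distrib_left)
qed

lemma coeff_partition_gf:
  "partition_gf N w $ m = (\<Sum>P\<in>bounded_partitions N m. \<Prod>j\<in>{1..N}. w j (count P j))"
proof (induction N arbitrary: m)
  case 0
  then show ?case by (simp add: partition_gf_def bounded_partitions_0)
next
  case (Suc N)
  define a where "a = Suc N"
  let ?G = "partition_gf N w"
  have "partition_gf a w = part_factor a (w a) * ?G"
    by (simp add: partition_gf_def atLeastAtMostSuc_conv a_def)
  then have "partition_gf a w $ m = (\<Sum>i\<le>m. part_factor a (w a) $ i * ?G $ (m - i))"
    by (simp add: fps_mult_nth atLeast0AtMost)
  also have "\<dots> = (\<Sum>i\<le>m. if a dvd i then w a (i div a) * ?G $ (m - a * (i div a)) else 0)"
    by (rule sum.cong) (auto simp: part_factor_def)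
  also have "\<dots> = (\<Sum>c\<le>m div a. w a c * ?G $ (m - a * c))"
    by (rule sum_multiples) (simp add: a_def)
  also have "\<dots> = (\<Sum>c\<le>m div a. \<Sum>P\<in>{P \<in> bounded_partitions a m. count P a = c}.
                        \<Prod>j\<in>{1..a}. w j (count P j))"
  proof (rule sum.cong[OF refl])
    fix c assume "c \<in> {..m div a}"
    then have "Suc N * c \<le> m"
      by (simp add: a_def less_eq_div_iff_mult_less_eq mult.commute)
    then show "w a c * ?G $ (m - a * c) = (\<Sum>P\<in>{P \<in> bounded_partitions a m. count P a = c}.
                        \<Prod>j\<in>{1..a}. w j (count P j))"
      unfolding a_def Suc.IH by (rule sum_bounded_partitions_fiber[symmetric])
  qed
  also have "\<dots> = (\<Sum>P\<in>bounded_partitions a m. \<Prod>j\<in>{1..a}. w j (count P j))"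
  proof (rule sum.group)
    show "finite (bounded_partitions a m)"
      by (simp add: bounded_partitions_def finite_partitions)
    show "(\<lambda>P. count P a) ` bounded_partitions a m \<subseteq> {..m div a}"
      using count_times_le_sum_mset[of a]
      by (auto simp: bounded_partitions_def partitions_def less_eq_div_iff_mult_less_eq mult.commute a_def)
  qed simp
  finally show ?case by (simp add: a_def)
qed

lemma part_factor_odd_times_one_plus_X_power:
  assumes "0 < j"
  shows "part_factor j (\<lambda>c. of_bool (odd c)) * (1 + fps_X ^ j)
       = fps_X ^ j * part_factor j (\<lambda>_. 1 :: 'a::comm_semiring_1)"
proof (rule fps_ext)
  fix m
  show "(part_factor j (\<lambda>c. of_bool (odd c)) * (1 + fps_X ^ j)) $ m
      = (fps_X ^ j * part_factor j (\<lambda>_. 1 :: 'a)) $ m"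
  proof (cases "m < j")
    case True
    then have "j dvd m \<longleftrightarrow> m = 0"
      using assms by (auto dest: dvd_imp_le)
    with True show ?thesis
      by (simp add: distrib_left fps_X_power_mult_nth fps_X_power_mult_right_nth part_factor_def)
  next
    case False
    define r where "r = m - j"
    with False have m: "m = r + j" by simp
    have "j dvd m \<longleftrightarrow> j dvd r"
      using m by simp
    moreover have "j dvd r \<Longrightarrow> m div j = Suc (r div j)"
      using assms m by auto
    ultimately show ?thesis
      using False m
      by (cases "j dvd r"; cases "even (r div j)")
        (simp_all add: distrib_left fps_X_power_mult_nth fps_X_power_mult_right_nth part_factor_def)
  qed
qed

definition odd_prefix_weight :: "nat \<Rightarrow> nat \<Rightarrow> nat \<Rightarrow> 'a::comm_semiring_1" where
  "odd_prefix_weight k j c = of_bool (j \<le> k \<longrightarrow> odd c)"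

lemma partition_gf_odd_prefix_step:
  assumes "1 \<le> k" "k \<le> N"
  shows "partition_gf N (odd_prefix_weight k) * (1 + fps_X ^ k)
       = fps_X ^ k * (partition_gf N (odd_prefix_weight (k - 1)) :: 'a::comm_semiring_1 fps)"
proof -
  define R :: "'a fps" where "R = (\<Prod>j\<in>{1..N} - {k}. part_factor j (odd_prefix_weight k j))"
  have k: "k \<in> {1..N}" using assms by simp
  have "odd_prefix_weight k j = (odd_prefix_weight (k - 1) j :: nat \<Rightarrow> 'a)" if "j \<noteq> k" for j
    using that by (auto simp: fun_eq_iff odd_prefix_weight_def)
  then have "R = (\<Prod>j\<in>{1..N} - {k}. part_factor j (odd_prefix_weight (k - 1) j))"
    unfolding R_def by (intro prod.cong) auto
  moreover have "odd_prefix_weight (k - 1) k = (\<lambda>_. 1 :: 'a)"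
    using assms by (auto simp: fun_eq_iff odd_prefix_weight_def)
  moreover have "odd_prefix_weight k k = (\<lambda>c. of_bool (odd c) :: 'a)"
    by (simp add: fun_eq_iff odd_prefix_weight_def)
  ultimately have "partition_gf N (odd_prefix_weight (k - 1)) = part_factor k (\<lambda>_. 1) * R"
    and "partition_gf N (odd_prefix_weight k) = part_factor k (\<lambda>c. of_bool (odd c)) * R"
    unfolding partition_gf_def R_def prod.remove[OF finite_atLeastAtMost k] by simp_all
  moreover have "part_factor k (\<lambda>c. of_bool (odd c)) * (1 + fps_X ^ k)
      = fps_X ^ k * (part_factor k (\<lambda>_. 1) :: 'a fps)"
    using assms by (intro part_factor_odd_times_one_plus_X_power) simp
  ultimately show ?thesis
    by (simp add: ac_simps)
qed

lemma coeff_partition_gf_odd_prefix: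
  assumes "k \<le> N" "m \<le> N"
  shows "partition_gf N (odd_prefix_weight k) $ m
       = (of_nat (card {P \<in> partitions m. k \<le> tstat P}) :: 'a::comm_semiring_1)"
proof -
  have "(\<forall>j\<in>{1..N}. j \<le> k \<longrightarrow> odd (count P j)) \<longleftrightarrow> k \<le> tstat P" for P
    using assms by (auto simp: le_tstat_iff)
  then have "(\<Prod>j\<in>{1..N}. odd_prefix_weight k j (count P j)) = (of_bool (k \<le> tstat P) :: 'a)" for P
    by (simp add: odd_prefix_weight_def prod_of_bool)
  then show ?thesis
    using assms by (simp add: coeff_partition_gf bounded_partitions_eq_partitions
        finite_partitions sum_of_bool_eq Int_def conj_commute)
qed

section \<open>Signed counts of sets of distinct parts\<close>

definition distinct_part_sets :: "nat \<Rightarrow> nat \<Rightarrow> nat set set" where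
  "distinct_part_sets k i = {A. finite A \<and> 0 \<notin> A \<and> card A = k \<and> \<Sum>A = i}"

(* For nonempty A this is (-1)^rank of the partition into the distinct parts A, since
   the rank Max A - card A has the parity of Max A + card A; the inserted 0 gives {} the sign 1. *)
definition rank_sign :: "nat set \<Rightarrow> int" where
  "rank_sign A = (-1) ^ (Max (insert 0 A) + card A)"

definition signed_count :: "nat \<Rightarrow> nat \<Rightarrow> int" where
  "signed_count k i = (\<Sum>A\<in>distinct_part_sets k i. rank_sign A)"

lemma finite_distinct_part_sets: "finite (distinct_part_sets k i)"
proof (rule finite_subset)
  show "distinct_part_sets k i \<subseteq> Pow {..i}"
    by (auto simp: distinct_part_sets_def intro: member_le_sum)
qed simp

lemma distinct_part_sets_0: "distinct_part_sets 0 i = (if i = 0 then {{}} else {})"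
  by (auto simp: distinct_part_sets_def)

lemma distinct_part_sets_eq_empty: "i < k \<Longrightarrow> distinct_part_sets k i = {}"
  using card_le_sum_nat by (fastforce simp: distinct_part_sets_def)

lemma distinct_part_sets_without_one:
  assumes "k \<le> i"
  shows "{A \<in> distinct_part_sets k i. 1 \<notin> A} = (`) Suc ` distinct_part_sets k (i - k)"
proof (intro equalityI subsetI)
  fix A assume A: "A \<in> {A \<in> distinct_part_sets k i. 1 \<notin> A}"
  define B where "B = Suc -` A"
  have AB: "A = Suc ` B"
    using A by (auto simp: B_def Int_absorb2 subset_range_Suc distinct_part_sets_def)
  have "finite B"
    using A by (simp add: B_def distinct_part_sets_def finite_vimageI)
  then have "B \<in> distinct_part_sets k (i - k)"
    using A by (auto simp: AB distinct_part_sets_def sum_Suc_image card_image)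
  with AB show "A \<in> (`) Suc ` distinct_part_sets k (i - k)" by blast
qed (use assms in \<open>auto simp: distinct_part_sets_def sum_Suc_image card_image\<close>)

lemma distinct_part_sets_with_one:
  assumes "1 \<le> k" "k \<le> i"
  shows "{A \<in> distinct_part_sets k i. 1 \<in> A}
       = (\<lambda>B. insert 1 (Suc ` B)) ` distinct_part_sets (k - 1) (i - k)"
proof (intro equalityI subsetI)
  fix A assume A: "A \<in> {A \<in> distinct_part_sets k i. 1 \<in> A}"
  define B where "B = Suc -` (A - {1})"
  have "Suc ` B = A - {1}"
    using A by (auto simp: B_def Int_absorb2 subset_range_Suc distinct_part_sets_def)
  then have AB: "A = insert 1 (Suc ` B)" and "1 \<notin> Suc ` B"
    using A by auto
  have "finite B"
    using A by (simp add: B_def distinct_part_sets_def finite_vimageI)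
  then have "B \<in> distinct_part_sets (k - 1) (i - k)"
    using A \<open>1 \<notin> Suc ` B\<close> by (auto simp: AB distinct_part_sets_def sum_Suc_image card_image)
  with AB show "A \<in> (\<lambda>B. insert 1 (Suc ` B)) ` distinct_part_sets (k - 1) (i - k)" by blast
next
  fix A assume "A \<in> (\<lambda>B. insert 1 (Suc ` B)) ` distinct_part_sets (k - 1) (i - k)"
  then obtain B where B: "B \<in> distinct_part_sets (k - 1) (i - k)" and AB: "A = insert 1 (Suc ` B)"
    by blast
  have "1 \<notin> Suc ` B"
    using B by (auto simp: distinct_part_sets_def)
  then show "A \<in> {A \<in> distinct_part_sets k i. 1 \<in> A}"
    using B assms by (auto simp: AB distinct_part_sets_def sum_Suc_image card_image)
qed

lemma rank_sign_Suc_image: "finite B \<Longrightarrow> B \<noteq> {} \<Longrightarrow> rank_sign (Suc ` B) = - rank_sign B"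
  by (simp add: rank_sign_def card_image Max_insert mono_Max_commute[symmetric] mono_Suc)

lemma rank_sign_insert_one:
  assumes "finite B" "0 \<notin> B"
  shows "rank_sign (insert 1 (Suc ` B)) = rank_sign B"
proof -
  have "insert 0 (insert 1 (Suc ` B)) = insert 0 (Suc ` insert 0 B)"
    by simp
  also have "Max \<dots> = Max (Suc ` insert 0 B)"
    using assms(1) by (simp add: Max_insert)
  also have "\<dots> = Suc (Max (insert 0 B))"
    using assms(1) mono_Max_commute[OF mono_Suc, of "insert 0 B"] by simp
  moreover have "1 \<notin> Suc ` B"
    using assms(2) by auto
  ultimately show ?thesis
    using assms(1) by (simp add: rank_sign_def card_image)
qed

(* Lower every part by one: a set without the part 1 keeps its k parts and changes sign
   (its largest part drops by one), a set containing 1 loses that part and keeps its sign. *)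
lemma signed_count_rec:
  assumes "1 \<le> k" "k \<le> i"
  shows "signed_count k i = signed_count (k - 1) (i - k) - signed_count k (i - k)"
proof -
  let ?D = "distinct_part_sets k i"
  have "signed_count k i = (\<Sum>A\<in>{A \<in> ?D. 1 \<notin> A}. rank_sign A) + (\<Sum>A\<in>{A \<in> ?D. 1 \<in> A}. rank_sign A)"
    unfolding signed_count_def
    using sum.Int_Diff[OF finite_distinct_part_sets, of rank_sign k i "{A. 1 \<in> A}"]
    by (simp add: Int_def set_diff_eq add.commute)
  also have "(\<Sum>A\<in>{A \<in> ?D. 1 \<notin> A}. rank_sign A) = (\<Sum>B\<in>distinct_part_sets k (i - k). rank_sign (Suc ` B))"
    unfolding distinct_part_sets_without_one[OF assms(2)]
    by (rule sum.reindex[unfolded comp_def]) (simp add: inj_on_def inj_image_eq_iff)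
  also have "\<dots> = - signed_count k (i - k)"
    unfolding signed_count_def sum_negf[symmetric]
    using assms(1) by (intro sum.cong refl rank_sign_Suc_image) (auto simp: distinct_part_sets_def)
  also have "(\<Sum>A\<in>{A \<in> ?D. 1 \<in> A}. rank_sign A)
      = (\<Sum>B\<in>distinct_part_sets (k - 1) (i - k). rank_sign (insert 1 (Suc ` B)))"
    unfolding distinct_part_sets_with_one[OF assms]
  proof (rule sum.reindex[unfolded comp_def])
    show "inj_on (\<lambda>B. insert 1 (Suc ` B)) (distinct_part_sets (k - 1) (i - k))"
    proof (rule inj_onI)
      fix B C assume "B \<in> distinct_part_sets (k - 1) (i - k)" "C \<in> distinct_part_sets (k - 1) (i - k)"
        and eq: "insert 1 (Suc ` B) = insert 1 (Suc ` C)"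
      then have "1 \<notin> Suc ` B" "1 \<notin> Suc ` C"
        by (auto simp: distinct_part_sets_def)
      with eq have "Suc ` B = Suc ` C"
        by (metis insert_ident)
      then show "B = C" by (simp add: inj_image_eq_iff)
    qed
  qed
  also have "\<dots> = signed_count (k - 1) (i - k)"
    unfolding signed_count_def
    by (intro sum.cong refl rank_sign_insert_one) (auto simp: distinct_part_sets_def)
  finally show ?thesis by simp
qed

definition signed_gf :: "nat \<Rightarrow> int fps" where
  "signed_gf k = Abs_fps (signed_count k)"

lemma signed_gf_0: "signed_gf 0 = 1"
  by (rule fps_ext) (simp add: signed_gf_def signed_count_def distinct_part_sets_0 rank_sign_def)

lemma signed_gf_step:
  assumes "1 \<le> k"
  shows "signed_gf k * (1 + fps_X ^ k) = fps_X ^ k * signed_gf (k - 1)"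
proof (rule fps_ext)
  fix m
  show "(signed_gf k * (1 + fps_X ^ k)) $ m = (fps_X ^ k * signed_gf (k - 1)) $ m"
  proof (cases "m < k")
    case True
    then show ?thesis
      by (simp add: distrib_left fps_X_power_mult_nth fps_X_power_mult_right_nth signed_gf_def
          signed_count_def distinct_part_sets_eq_empty)
  next
    case False
    then show ?thesis
      using signed_count_rec[OF assms, of m]
      by (simp add: distrib_left fps_X_power_mult_nth fps_X_power_mult_right_nth signed_gf_def)
  qed
qed

lemma signed_gf_times_partition_gf:
  "k \<le> N \<Longrightarrow> signed_gf k * partition_gf N (odd_prefix_weight 0) = partition_gf N (odd_prefix_weight k)"
proof (induction k)
  case 0
  then show ?case by (simp add: signed_gf_0)
next
  case (Suc k)
  have "signed_gf (Suc k) * partition_gf N (odd_prefix_weight 0) * (1 + fps_X ^ Suc k)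
      = fps_X ^ Suc k * (signed_gf k * partition_gf N (odd_prefix_weight 0))"
    using signed_gf_step[of "Suc k"] by (simp add: ac_simps)
  also have "\<dots> = fps_X ^ Suc k * partition_gf N (odd_prefix_weight k)"
    using Suc by simp
  also have "\<dots> = partition_gf N (odd_prefix_weight (Suc k)) * (1 + fps_X ^ Suc k)"
    using partition_gf_odd_prefix_step[of "Suc k" N] Suc.prems by (simp add: eq_commute)
  finally have "signed_gf (Suc k) * partition_gf N (odd_prefix_weight 0) * (1 + fps_X ^ Suc k)
      = partition_gf N (odd_prefix_weight (Suc k)) * (1 + fps_X ^ Suc k)" .
  moreover have "(1 + fps_X ^ Suc k :: int fps) \<noteq> 0"
  proof
    assume "(1 + fps_X ^ Suc k :: int fps) = 0"
    then have "(1 + fps_X ^ Suc k :: int fps) $ 0 = 0" by simp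
    then show False by simp
  qed
  ultimately show ?case
    by simp
qed

lemma distinct_partitions_eq_image:
  "distinct_partitions i = mset_set ` {A. finite A \<and> 0 \<notin> A \<and> \<Sum>A = i}"
proof (intro equalityI subsetI)
  fix P assume P: "P \<in> distinct_partitions i"
  then have eq: "mset_set (set_mset P) = P"
    by (simp add: distinct_partitions_def mset_set_set_mset_eq)
  have "\<Sum>(set_mset P) = sum_mset (mset_set (set_mset P))"
    by (simp add: sum_unfold_sum_mset)
  then have "\<Sum>(set_mset P) = sum_mset P"
    by (simp only: eq)
  with P eq show "P \<in> mset_set ` {A. finite A \<and> 0 \<notin> A \<and> \<Sum>A = i}"
    by (auto simp: distinct_partitions_def partitions_def intro!: image_eqI[of _ _ "set_mset P"])
qed (auto simp: distinct_partitions_def partitions_def count_mset_set' sum_unfold_sum_mset intro: gr0I)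

lemma rank_sign_eq_prank_parity:
  assumes "finite A" "A \<noteq> {}"
  shows "rank_sign A = (if even (prank (mset_set A)) then 1 else -1)"
proof -
  have "even (prank (mset_set A)) \<longleftrightarrow> even (Max A + card A)"
    using assms by (simp add: prank_def)
  then show ?thesis
    using assms by (simp add: rank_sign_def Max_insert)
qed

lemma S_eq_sum_signed_count:
  assumes "1 \<le> i" "i \<le> n"
  shows "S i = (\<Sum>k\<in>{1..n}. signed_count k i)"
proof -
  define DA where "DA = {A. finite A \<and> 0 \<notin> A \<and> \<Sum>A = i}"
  have "finite DA"
    by (rule finite_subset[of _ "Pow {..i}"]) (auto simp: DA_def intro: member_le_sum)
  have "S i = (\<Sum>P\<in>distinct_partitions i. if even (prank P) then 1 else -1)"
    using finite_partitions[of i]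
    by (simp add: S_def sum.If_cases distinct_partitions_def Int_def conj_commute)
  also have "\<dots> = (\<Sum>A\<in>DA. if even (prank (mset_set A)) then 1 else -1)"
  proof (unfold distinct_partitions_eq_image DA_def[symmetric], rule sum.reindex[unfolded comp_def])
    show "inj_on mset_set DA"
    proof (rule inj_onI)
      fix A B assume "A \<in> DA" "B \<in> DA" "mset_set A = mset_set B"
      then have "set_mset (mset_set A) = set_mset (mset_set B)" by simp
      with \<open>A \<in> DA\<close> \<open>B \<in> DA\<close> show "A = B" by (simp add: DA_def)
    qed
  qed
  also have "\<dots> = (\<Sum>A\<in>DA. rank_sign A)"
  proof (rule sum.cong[OF refl])
    fix A assume "A \<in> DA"
    then have "finite A" "A \<noteq> {}"
      using assms(1) by (auto simp: DA_def)
    then show "(if even (prank (mset_set A)) then 1 else -1) = rank_sign A"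
      by (simp add: rank_sign_eq_prank_parity)
  qed
  also have "\<dots> = (\<Sum>k\<in>{1..n}. \<Sum>A\<in>{A \<in> DA. card A = k}. rank_sign A)"
  proof (rule sum.group[symmetric])
    show "card ` DA \<subseteq> {1..n}"
    proof
      fix k assume "k \<in> card ` DA"
      then obtain A where A: "A \<in> DA" "k = card A" by blast
      then have "A \<noteq> {}" using assms(1) by (auto simp: DA_def)
      with A have "1 \<le> k" by (simp add: DA_def Suc_le_eq card_gt_0_iff)
      moreover have "k \<le> n" using A card_le_sum_nat[of A] assms(2) by (simp add: DA_def)
      ultimately show "k \<in> {1..n}" by simp
    qed
  qed (use \<open>finite DA\<close> in simp_all)
  also have "\<dots> = (\<Sum>k\<in>{1..n}. signed_count k i)"
    unfolding signed_count_def distinct_part_sets_def DA_def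
    by (intro sum.cong[OF refl] sum.cong[OF _ refl]) auto
  finally show ?thesis .
qed

lemma card_le_tstat_eq_convolution:
  assumes "1 \<le> k" "k \<le> n"
  shows "int (card {P \<in> partitions n. k \<le> tstat P})
       = (\<Sum>i\<in>{1..n}. signed_count k i * npart (int n - int i))"
proof -
  have "int (card {P \<in> partitions n. k \<le> tstat P}) = partition_gf n (odd_prefix_weight k) $ n"
    using assms by (simp add: coeff_partition_gf_odd_prefix)
  also have "\<dots> = (signed_gf k * partition_gf n (odd_prefix_weight 0)) $ n"
    using assms by (simp add: signed_gf_times_partition_gf)
  also have "\<dots> = (\<Sum>i=0..n. signed_count k i * partition_gf n (odd_prefix_weight 0) $ (n - i))"
    by (simp add: fps_mult_nth signed_gf_def)
  also have "\<dots> = (\<Sum>i\<in>{1..n}. signed_count k i * partition_gf n (odd_prefix_weight 0) $ (n - i))"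
    using assms(1) by (simp add: sum.atLeast_Suc_atMost signed_count_def distinct_part_sets_eq_empty)
  also have "\<dots> = (\<Sum>i\<in>{1..n}. signed_count k i * npart (int n - int i))"
  proof (intro sum.cong refl)
    fix i assume "i \<in> {1..n}"
    then have "npart (int n - int i) = int (card (partitions (n - i)))"
      by (simp add: npart_def nat_diff_distrib)
    moreover have "partition_gf n (odd_prefix_weight 0) $ (n - i) = int (card (partitions (n - i)))"
      by (simp add: coeff_partition_gf_odd_prefix)
    ultimately show "signed_count k i * partition_gf n (odd_prefix_weight 0) $ (n - i)
        = signed_count k i * npart (int n - int i)"
      by simp
  qed
  finally show ?thesis .
qed

theorem theorem6:
  fixes n :: nat
  assumes "n \<ge> 1"
  shows "int (\<Sum>P\<in>partitions n. tstat P) = (\<Sum>i\<in>{1..n}. S i * npart (int n - int i))"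
proof -
  have "(\<Sum>i\<in>{1..n}. S i * npart (int n - int i))
      = (\<Sum>i\<in>{1..n}. \<Sum>k\<in>{1..n}. signed_count k i * npart (int n - int i))"
    by (intro sum.cong refl) (auto simp: S_eq_sum_signed_count sum_distrib_right)
  also have "\<dots> = (\<Sum>k\<in>{1..n}. \<Sum>i\<in>{1..n}. signed_count k i * npart (int n - int i))"
    by (rule sum.swap)
  also have "\<dots> = (\<Sum>k\<in>{1..n}. int (card {P \<in> partitions n. k \<le> tstat P}))"
    by (intro sum.cong refl) (simp add: card_le_tstat_eq_convolution)
  also have "\<dots> = int (\<Sum>k\<in>{1..n}. card {P \<in> partitions n. k \<le> tstat P})"
    by simp
  also have "(\<Sum>k\<in>{1..n}. card {P \<in> partitions n. k \<le> tstat P}) = (\<Sum>P\<in>partitions n. tstat P)"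
  proof (intro sum_eq_sum_card_ge[symmetric] finite_partitions ballI)
    fix P assume "P \<in> partitions n"
    then show "tstat P \<le> n"
      using tstat_le_sum_mset[of P] by (simp add: partitions_def)
  qed
  finally show ?thesis ..
qed

end
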